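(* Let $P$ be a finite poset and $R$ a commutative unital ring. Then there is an isomorphism of $R$-algebras $$Z^3_2(P,R)/Z^3_3(P,R)\cong\bigoplus_{x,y\in P,\ l(x,y)=1}R(e_{xxy}+e_{xyy}),$$ where the right-hand side is the direct sum of algebras (coordinatewise multiplication) and each $R(e_{xxy}+e_{xyy})$ is the subalgebra of $I^3(P,R)$ spanned by the idempotent $e_{xxy}+e_{xyy}$.
   Context: For a finite poset $P$, $P^3_\le=\{(x,y,z)\in P^3: x\le y\le z\}$, and $I^3(P,R)$ is the $R$-module of functions $f:P^3_\le\to R$ with multiplication $(fg)(x_1,x_2,x_3)=\sum f(x_1,y_1,y_2)g(y_1,y_2,x_3)$ over all $x_1\le y_1\le x_2\le y_2\le x_3$. For $x\le y\le z$, $e_{xyz}$ is the function equal to $1$ at $(x,y,z)$ and $0$ elsewhere. For $a\le b$, $l(a,b)$ is the maximum of $|C|-1$ over chains $C$ in the interval $[a,b]$. $J^3_1(P,R)=\{f: f(x,x,x)=0\ \forall x\}$. $[f,g]=fg-gf$; $[U,V]$ is the $R$-submodule spanned by all $[u,v]$, $u\in U,v\in V$. $Z^3_1(P,R)=J^3_1(P,R)$, $Z^3_2(P,R)=[Z^3_1(P,R),Z^3_1(P,R)]$, $Z^3_3(P,R)=[Z^3_2(P,R),Z^3_2(P,R)]$; $Z^3_3(P,R)$ is an ideal of the algebra $Z^3_2(P,R)$, and the quotient carries the induced multiplication. *)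

theory Defs
  imports Main
begin

text \<open>Finite poset P: a type of class order and finite. Elements of I^3(P,R) are
  represented as functions P => P => P => R vanishing outside P^3_le.\<close>

type_synonym ('a,'r) fn3 = "'a \<Rightarrow> 'a \<Rightarrow> 'a \<Rightarrow> 'r"

definition I3 :: "('a::order, 'r::comm_ring_1) fn3 set" where
  "I3 = {f. \<forall>x y z. \<not> (x \<le> y \<and> y \<le> z) \<longrightarrow> f x y z = 0}"

definition add3 :: "('a, 'r::comm_ring_1) fn3 \<Rightarrow> ('a, 'r) fn3 \<Rightarrow> ('a, 'r) fn3" where
  "add3 f g = (\<lambda>a b c. f a b c + g a b c)"

definition smul3 :: "'r::comm_ring_1 \<Rightarrow> ('a, 'r) fn3 \<Rightarrow> ('a, 'r) fn3" where
  "smul3 r f = (\<lambda>a b c. r * f a b c)"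

definition zero3 :: "('a, 'r::comm_ring_1) fn3" where
  "zero3 = (\<lambda>a b c. 0)"

definition mult3 :: "('a::{order,finite}, 'r::comm_ring_1) fn3 \<Rightarrow> ('a, 'r) fn3 \<Rightarrow> ('a, 'r) fn3" where
  "mult3 f g = (\<lambda>x1 x2 x3. if x1 \<le> x2 \<and> x2 \<le> x3 then
      (\<Sum>(y1, y2) \<in> {(y1, y2). x1 \<le> y1 \<and> y1 \<le> x2 \<and> x2 \<le> y2 \<and> y2 \<le> x3}.
          f x1 y1 y2 * g y1 y2 x3)
    else 0)"

definition elem3 :: "'a \<Rightarrow> 'a \<Rightarrow> 'a \<Rightarrow> ('a, 'r::comm_ring_1) fn3" where
  "elem3 x y z = (\<lambda>a b c. if a = x \<and> b = y \<and> c = z then 1 else 0)"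

definition is_chain_in :: "'a::order set \<Rightarrow> 'a \<Rightarrow> 'a \<Rightarrow> bool" where
  "is_chain_in C a b \<longleftrightarrow> C \<subseteq> {a..b} \<and> (\<forall>x\<in>C. \<forall>y\<in>C. x \<le> y \<or> y \<le> x)"

definition len :: "'a::{order,finite} \<Rightarrow> 'a \<Rightarrow> nat" where
  "len a b = Max {card C - 1 | C. is_chain_in C a b}"

definition J31 :: "('a::order, 'r::comm_ring_1) fn3 set" where
  "J31 = {f \<in> I3. \<forall>x. f x x x = 0}"

inductive_set rspan :: "('a, 'r::comm_ring_1) fn3 set \<Rightarrow> ('a, 'r) fn3 set"
  for S :: "('a, 'r) fn3 set" where
  zero: "zero3 \<in> rspan S"
| gen: "s \<in> S \<Longrightarrow> s \<in> rspan S"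
| add: "f \<in> rspan S \<Longrightarrow> g \<in> rspan S \<Longrightarrow> add3 f g \<in> rspan S"
| smul: "f \<in> rspan S \<Longrightarrow> smul3 r f \<in> rspan S"

definition commut3 :: "('a::{order,finite}, 'r::comm_ring_1) fn3 \<Rightarrow> ('a, 'r) fn3 \<Rightarrow> ('a, 'r) fn3" where
  "commut3 f g = (\<lambda>a b c. mult3 f g a b c - mult3 g f a b c)"

definition commsp :: "('a::{order,finite}, 'r::comm_ring_1) fn3 set \<Rightarrow> ('a, 'r) fn3 set \<Rightarrow> ('a, 'r) fn3 set" where
  "commsp U V = rspan {commut3 u v | u v. u \<in> U \<and> v \<in> V}"

definition Z31 :: "('a::{order,finite}, 'r::comm_ring_1) fn3 set" where
  "Z31 = J31"
definition Z32 :: "('a::{order,finite}, 'r::comm_ring_1) fn3 set" where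
  "Z32 = commsp Z31 Z31"
definition Z33 :: "('a::{order,finite}, 'r::comm_ring_1) fn3 set" where
  "Z33 = commsp Z32 Z32"

text \<open>The external direct sum of the subalgebras R(e_xxy + e_xyy), over pairs
  x,y with x <= y and l(x,y) = 1: families d indexed by pairs, with d x y in
  R(e_xxy+e_xyy) for such pairs and d x y = 0 otherwise; operations coordinatewise.\<close>
definition idem :: "'a \<Rightarrow> 'a \<Rightarrow> ('a, 'r::comm_ring_1) fn3" where
  "idem x y = add3 (elem3 x x y) (elem3 x y y)"

definition covpair :: "'a::{order,finite} \<Rightarrow> 'a \<Rightarrow> bool" where
  "covpair x y \<longleftrightarrow> x \<le> y \<and> len x y = 1"

type_synonym ('a,'r) dsum = "'a \<Rightarrow> 'a \<Rightarrow> ('a, 'r) fn3"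

definition DS :: "('a::{order,finite}, 'r::comm_ring_1) dsum set" where
  "DS = {d. \<forall>x y. (covpair x y \<longrightarrow> (\<exists>r. d x y = smul3 r (idem x y)))
                  \<and> (\<not> covpair x y \<longrightarrow> d x y = zero3)}"

definition ds_add :: "('a, 'r::comm_ring_1) dsum \<Rightarrow> ('a, 'r) dsum \<Rightarrow> ('a, 'r) dsum" where
  "ds_add d e = (\<lambda>x y. add3 (d x y) (e x y))"
definition ds_smul :: "'r::comm_ring_1 \<Rightarrow> ('a, 'r) dsum \<Rightarrow> ('a, 'r) dsum" where
  "ds_smul r d = (\<lambda>x y. smul3 r (d x y))"
definition ds_mult :: "('a::{order,finite}, 'r::comm_ring_1) dsum \<Rightarrow> ('a, 'r) dsum \<Rightarrow> ('a, 'r) dsum" where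
  "ds_mult d e = (\<lambda>x y. mult3 (d x y) (e x y))"
definition ds_zero :: "('a, 'r::comm_ring_1) dsum" where
  "ds_zero = (\<lambda>x y. zero3)"

end

theory Submission
  imports Defs
begin

(* For a covering pair x < z the entries of a product f g at (x,x,z) and (x,z,z) are
   f(x,x,z) g(x,z,z) plus terms containing a diagonal entry f(x,x,x) or g(z,z,z). Hence every
   commutator of elements of J^3_1 takes equal values at (x,x,z) and (x,z,z), and every
   commutator of two such "cover balanced" functions vanishes there. Conversely, the identities
   [e_xxy + e_xyy, e_yyz + e_yzz] = e_xyz, [e_xxz, e_xzz] = e_xxz + e_xzz (x < z a cover) and
   [e_xxb + e_xbb, e_xbz] = e_xxz + e_xbz (x < b a cover) with its mirror image express every
   remaining basis element as a combination of commutators. So Z^3_2 is exactly the set of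
   cover balanced functions and Z^3_3 the set of those vanishing at the cover entries. On Z^3_2
   the entry at (x,x,z) is multiplicative, which makes f |-> (f(x,x,z) (e_xxz + e_xzz)) over
   all covers a surjective algebra map with kernel Z^3_3. *)

definition sum3 :: "('i \<Rightarrow> ('a, 'r::comm_ring_1) fn3) \<Rightarrow> 'i set \<Rightarrow> ('a, 'r) fn3" where
  "sum3 g A = (\<lambda>a b c. \<Sum>i\<in>A. g i a b c)"

lemma rspan_least:
  assumes "S \<subseteq> M" "zero3 \<in> M" "\<And>f g. f \<in> M \<Longrightarrow> g \<in> M \<Longrightarrow> add3 f g \<in> M"
    "\<And>r f. f \<in> M \<Longrightarrow> smul3 r f \<in> M"
  shows "rspan S \<subseteq> M"
proof
  fix f assume "f \<in> rspan S"
  then show "f \<in> M" by induction (use assms in auto)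
qed

lemma rspan_diff:
  assumes "f \<in> rspan S" "g \<in> rspan S"
  shows "(\<lambda>a b c. f a b c - g a b c) \<in> rspan S"
proof -
  have "(\<lambda>a b c. f a b c - g a b c) = add3 f (smul3 (-1) g)"
    by (simp add: add3_def smul3_def fun_eq_iff)
  then show ?thesis using assms by (metis rspan.add rspan.smul)
qed

lemma rspan_sum3:
  assumes "finite A" "\<And>i. i \<in> A \<Longrightarrow> g i \<in> rspan S"
  shows "sum3 g A \<in> rspan S"
  using assms
proof (induction A rule: finite_induct)
  case empty
  have "sum3 g {} = zero3" by (simp add: sum3_def zero3_def)
  then show ?case by (metis rspan.zero)
next
  case (insert i A)
  have "sum3 g (insert i A) = add3 (g i) (sum3 g A)"
    using insert.hyps by (simp add: sum3_def add3_def)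
  then show ?case using insert rspan.add by (metis insertCI)
qed

lemma commut3_in_commsp: "u \<in> U \<Longrightarrow> v \<in> V \<Longrightarrow> commut3 u v \<in> commsp U V"
  unfolding commsp_def by (auto intro: rspan.gen)

lemma sum3_elem3_expansion:
  fixes h :: "('a::finite, 'r::comm_ring_1) fn3"
  shows "h = sum3 (\<lambda>(a, b, c). smul3 (h a b c) (elem3 a b c)) {(a, b, c). h a b c \<noteq> 0}"
proof (intro ext)
  fix x y z
  have "sum3 (\<lambda>(a, b, c). smul3 (h a b c) (elem3 a b c)) {(a, b, c). h a b c \<noteq> 0} x y z
      = (\<Sum>p\<in>{(a, b, c). h a b c \<noteq> 0}. if p = (x, y, z) then h x y z else 0)"
    unfolding sum3_def by (intro sum.cong) (auto simp: smul3_def elem3_def split: if_splits)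
  also have "\<dots> = h x y z" by (subst sum.delta) auto
  finally show "h x y z = sum3 (\<lambda>(a, b, c). smul3 (h a b c) (elem3 a b c))
      {(a, b, c). h a b c \<noteq> 0} x y z" by simp
qed

lemma len_ge: "is_chain_in C x y \<Longrightarrow> card C - 1 \<le> len (x::'a::{order,finite}) y"
  unfolding len_def by (rule Max_ge) auto

lemma len_le:
  assumes "\<And>C. is_chain_in C x y \<Longrightarrow> card C - 1 \<le> n"
  shows "len (x::'a::{order,finite}) y \<le> n"
proof -
  have "is_chain_in {} x y" by (simp add: is_chain_in_def)
  then show ?thesis unfolding len_def using assms by (subst Max_le_iff) auto
qed

lemma covpair_iff: "covpair x y \<longleftrightarrow> (x::'a::{order,finite}) < y \<and> (\<nexists>t. x < t \<and> t < y)"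
proof
  assume c: "covpair x y"
  then have xy: "x \<le> y" and l: "len x y = 1" by (auto simp: covpair_def)
  have "x \<noteq> y"
  proof
    assume "x = y"
    have "len x y \<le> 0"
    proof (rule len_le)
      fix C assume "is_chain_in C x y"
      then have "C \<subseteq> {x}" using \<open>x = y\<close> by (auto simp: is_chain_in_def)
      then show "card C - 1 \<le> 0" using card_mono[of "{x}" C] by simp
    qed
    then show False using l by simp
  qed
  moreover have "\<nexists>t. x < t \<and> t < y"
  proof
    assume "\<exists>t. x < t \<and> t < y"
    then obtain t where "x < t" "t < y" by blast
    then have "is_chain_in {x, t, y} x y" "card {x, t, y} = 3"
      by (auto simp: is_chain_in_def less_le)
    then show False using len_ge[of "{x, t, y}" x y] l by simp
  qed
  ultimately show "x < y \<and> (\<nexists>t. x < t \<and> t < y)" using xy by auto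
next
  assume a: "x < y \<and> (\<nexists>t. x < t \<and> t < y)"
  have "len x y \<le> 1"
  proof (rule len_le)
    fix C assume "is_chain_in C x y"
    then have "C \<subseteq> {x, y}" using a by (force simp: is_chain_in_def less_le)
    then show "card C - 1 \<le> 1" using card_mono[of "{x, y}" C] a by (simp add: less_le)
  qed
  moreover have "is_chain_in {x, y} x y" "card {x, y} = 2" using a by (auto simp: is_chain_in_def)
  then have "1 \<le> len x y" using len_ge[of "{x, y}" x y] by simp
  ultimately show "covpair x y" using a by (simp add: covpair_def less_le)
qed

lemma covpair_less: "covpair x z \<Longrightarrow> x < z"
  by (simp add: covpair_iff)

lemma covpair_between: "covpair x z \<Longrightarrow> x \<le> t \<Longrightarrow> t \<le> z \<Longrightarrow> t = x \<or> t = z"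
  by (auto simp: covpair_iff le_less)

lemma exists_covpair_above:
  assumes "(x::'a::{order,finite}) < z"
  shows "\<exists>b. covpair x b \<and> b \<le> z"
proof -
  obtain b where b: "x < b" "b \<le> z" and min: "\<forall>t. x < t \<and> t \<le> z \<longrightarrow> t \<le> b \<longrightarrow> b = t"
    using finite_has_minimal[of "{t. x < t \<and> t \<le> z}"] assms by auto
  have "covpair x b"
    unfolding covpair_iff using b min by (auto dest: order.strict_trans less_imp_le)
  with b show ?thesis by blast
qed

lemma exists_covpair_below:
  assumes "(x::'a::{order,finite}) < z"
  shows "\<exists>b. x \<le> b \<and> covpair b z"
proof -
  obtain b where b: "x \<le> b" "b < z" and max: "\<forall>t. x \<le> t \<and> t < z \<longrightarrow> b \<le> t \<longrightarrow> b = t"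
    using finite_has_maximal[of "{t. x \<le> t \<and> t < z}"] assms by auto
  have "covpair b z"
    unfolding covpair_iff using b max by (metis less_imp_le order.trans less_irrefl)
  with b show ?thesis by blast
qed

lemma mult3_elem3:
  fixes a b c :: "'a::{order,finite}"
  shows "mult3 (elem3 a b c) (elem3 a' b' c') = (\<lambda>x1 x2 x3.
    if (x1 = a \<and> a' = b \<and> b' = c \<and> x3 = c') \<and> a \<le> b \<and> b \<le> x2 \<and> x2 \<le> c \<and> c \<le> c'
    then (1::'r::comm_ring_1) else 0)"
proof (intro ext)
  fix x1 x2 x3 :: 'a
  let ?S = "{(y1, y2). x1 \<le> y1 \<and> y1 \<le> x2 \<and> x2 \<le> y2 \<and> y2 \<le> x3}"
  let ?P = "x1 = a \<and> a' = b \<and> b' = c \<and> x3 = c'"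
  show "mult3 (elem3 a b c) (elem3 a' b' c') x1 x2 x3 =
    (if ?P \<and> a \<le> b \<and> b \<le> x2 \<and> x2 \<le> c \<and> c \<le> c' then (1::'r) else 0)"
  proof (cases "x1 \<le> x2 \<and> x2 \<le> x3")
    case True
    have "mult3 (elem3 a b c) (elem3 a' b' c') x1 x2 x3 =
        (\<Sum>p\<in>?S. elem3 a b c x1 (fst p) (snd p) * elem3 a' b' c' (fst p) (snd p) x3 :: 'r)"
      using True by (simp add: mult3_def split_def)
    also have "\<dots> = (\<Sum>p\<in>?S. if p = (b, c) then if ?P then 1 else 0 else 0)"
      by (intro sum.cong) (auto simp: elem3_def)
    also have "\<dots> = (if ?P \<and> a \<le> b \<and> b \<le> x2 \<and> x2 \<le> c \<and> c \<le> c' then 1 else 0)"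
      by (subst sum.delta) auto
    finally show ?thesis .
  next
    case False
    then show ?thesis unfolding mult3_def using order_trans by auto
  qed
qed

lemma smul3_smul3: "smul3 r (smul3 s f) = smul3 (r * s) f"
  by (simp add: smul3_def mult.assoc)

lemma mult3_add_left: "mult3 (add3 f g) h = add3 (mult3 f h) (mult3 g h)"
  by (simp add: mult3_def add3_def fun_eq_iff sum.distrib ring_distribs split_def)

lemma mult3_add_right: "mult3 h (add3 f g) = add3 (mult3 h f) (mult3 h g)"
  by (simp add: mult3_def add3_def fun_eq_iff sum.distrib ring_distribs split_def)

lemma mult3_smul_left: "mult3 (smul3 r f) g = smul3 r (mult3 f g)"
  by (simp add: mult3_def smul3_def fun_eq_iff sum_distrib_left mult.assoc split_def)

lemma mult3_smul_right: "mult3 f (smul3 r g) = smul3 r (mult3 f g)"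
  by (simp add: mult3_def smul3_def fun_eq_iff sum_distrib_left algebra_simps split_def)

lemma mult3_zero_left: "mult3 zero3 f = zero3"
  by (simp add: mult3_def zero3_def fun_eq_iff)

lemma mult3_in_I3: "mult3 f g \<in> I3"
  by (auto simp: I3_def mult3_def)

lemma mult3_diag: "mult3 f g (x::'a::{order,finite}) x x = f x x x * g x x x"
proof -
  have "{(y1, y2). x \<le> y1 \<and> y1 \<le> x \<and> x \<le> y2 \<and> y2 \<le> x} = {(x, x)}"
    by (auto intro: antisym)
  then show ?thesis by (simp add: mult3_def)
qed

lemma mult3_covpair_left:
  assumes "covpair (x::'a::{order,finite}) z"
  shows "mult3 f g x x z = f x x x * g x x z + f x x z * g x z z"
proof -
  have "x < z" using assms by (rule covpair_less)
  moreover have "{(y1, y2). x \<le> y1 \<and> y1 \<le> x \<and> x \<le> y2 \<and> y2 \<le> z} = {(x, x), (x, z)}"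
    using covpair_between[OF assms] \<open>x < z\<close> by (auto intro: antisym)
  ultimately show ?thesis by (simp add: mult3_def less_imp_le)
qed

lemma mult3_covpair_right:
  assumes "covpair (x::'a::{order,finite}) z"
  shows "mult3 f g x z z = f x x z * g x z z + f x z z * g z z z"
proof -
  have "x < z" using assms by (rule covpair_less)
  moreover have "{(y1, y2). x \<le> y1 \<and> y1 \<le> z \<and> z \<le> y2 \<and> y2 \<le> z} = {(x, z), (z, z)}"
    using covpair_between[OF assms] \<open>x < z\<close> by (auto intro: antisym)
  ultimately show ?thesis by (simp add: mult3_def less_imp_le)
qed

lemma idem_apply:
  assumes "covpair (a::'a::{order,finite}) c"
  shows "(idem a c :: ('a, 'r::comm_ring_1) fn3) p q r =
    (if p = a \<and> r = c \<and> (q = a \<or> q = c) then 1 else 0)"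
  using covpair_less[OF assms] by (auto simp: idem_def add3_def elem3_def)

lemma idem_mult_idem:
  assumes "covpair (x::'a::{order,finite}) z"
  shows "mult3 (idem x z) (idem x z) = (idem x z :: ('a, 'r::comm_ring_1) fn3)"
  unfolding idem_def mult3_add_left mult3_add_right mult3_elem3
  using covpair_less[OF assms] covpair_between[OF assms]
  by (auto simp: fun_eq_iff add3_def elem3_def less_le intro: antisym)

lemma commut3_idem_idem:
  assumes "(x::'a::{order,finite}) < y" "y < z"
  shows "commut3 (idem x y) (idem y z) = (elem3 x y z :: ('a, 'r::comm_ring_1) fn3)"
  unfolding commut3_def idem_def mult3_add_left mult3_add_right mult3_elem3
  using assms by (auto simp: fun_eq_iff add3_def elem3_def less_le_not_le intro: antisym order_trans)

lemma commut3_idem_elem3: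
  assumes "covpair (x::'a::{order,finite}) b" "b < z"
  shows "commut3 (idem x b) (elem3 x b z) = add3 (elem3 x x z) (elem3 x b z :: ('a, 'r::comm_ring_1) fn3)"
  unfolding commut3_def idem_def mult3_add_left mult3_add_right mult3_elem3
  using covpair_less[OF assms(1)] covpair_between[OF assms(1)] assms(2)
  by (auto simp: fun_eq_iff add3_def elem3_def less_le_not_le intro: antisym order_trans)

lemma commut3_elem3_idem:
  assumes "(x::'a::{order,finite}) < b" "covpair b z"
  shows "commut3 (elem3 x b z) (idem b z) = add3 (elem3 x b z) (elem3 x z z :: ('a, 'r::comm_ring_1) fn3)"
  unfolding commut3_def idem_def mult3_add_left mult3_add_right mult3_elem3
  using covpair_less[OF assms(2)] covpair_between[OF assms(2)] assms(1)
  by (auto simp: fun_eq_iff add3_def elem3_def less_le_not_le intro: antisym order_trans)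

lemma commut3_elem3_elem3:
  assumes "covpair (x::'a::{order,finite}) z"
  shows "commut3 (elem3 x x z) (elem3 x z z) = (idem x z :: ('a, 'r::comm_ring_1) fn3)"
  unfolding commut3_def idem_def mult3_elem3
  using covpair_less[OF assms] covpair_between[OF assms]
  by (auto simp: fun_eq_iff add3_def elem3_def less_le_not_le intro: antisym)

definition cover_balanced :: "('a::{order,finite}, 'r::comm_ring_1) fn3 set" where
  "cover_balanced = {f \<in> J31. \<forall>x z. covpair x z \<longrightarrow> f x x z = f x z z}"

definition cover_vanishing :: "('a::{order,finite}, 'r::comm_ring_1) fn3 set" where
  "cover_vanishing = {f \<in> J31. \<forall>x z. covpair x z \<longrightarrow> f x x z = 0 \<and> f x z z = 0}"

lemma cover_balancedD: "f \<in> cover_balanced \<Longrightarrow> covpair x z \<Longrightarrow> f x x z = f x z z"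
  unfolding cover_balanced_def by blast

lemma elem3_in_J31: "a \<le> b \<Longrightarrow> b \<le> c \<Longrightarrow> a < c \<Longrightarrow> elem3 a b c \<in> J31"
  by (auto simp: J31_def I3_def elem3_def)

lemma idem_in_cover_balanced: "x < y \<Longrightarrow> idem x y \<in> cover_balanced"
  by (auto simp: cover_balanced_def J31_def I3_def elem3_def idem_def add3_def less_le covpair_iff)

lemma elem3_in_cover_balanced: "x < y \<Longrightarrow> y < z \<Longrightarrow> elem3 x y z \<in> cover_balanced"
  by (auto simp: cover_balanced_def J31_def I3_def elem3_def less_le covpair_iff)

lemma commsp_subset_cover_balanced:
  assumes "U \<subseteq> J31" "V \<subseteq> J31"
  shows "commsp U V \<subseteq> cover_balanced"
  unfolding commsp_def
proof (rule rspan_least)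
  show "{commut3 u v |u v. u \<in> U \<and> v \<in> V} \<subseteq> cover_balanced"
  proof clarify
    fix u v assume "u \<in> U" "v \<in> V"
    then have u: "u \<in> J31" and v: "v \<in> J31" using assms by blast+
    have "commut3 u v \<in> I3"
      using mult3_in_I3[of u v] mult3_in_I3[of v u] by (auto simp: I3_def commut3_def)
    moreover have "commut3 u v x x x = 0" for x
      using u v by (simp add: commut3_def mult3_diag J31_def)
    moreover have "commut3 u v x x z = commut3 u v x z z" if "covpair x z" for x z
      using u v that by (simp add: commut3_def mult3_covpair_left mult3_covpair_right J31_def)
    ultimately show "commut3 u v \<in> cover_balanced" by (auto simp: cover_balanced_def J31_def)
  qed
qed (fastforce simp: cover_balanced_def J31_def I3_def zero3_def add3_def smul3_def)+

lemma commsp_subset_cover_vanishing: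
  assumes "U \<subseteq> cover_balanced" "V \<subseteq> cover_balanced"
  shows "commsp U V \<subseteq> cover_vanishing"
  unfolding commsp_def
proof (rule rspan_least)
  show "{commut3 u v |u v. u \<in> U \<and> v \<in> V} \<subseteq> cover_vanishing"
  proof clarify
    fix u v assume "u \<in> U" "v \<in> V"
    then have u: "u \<in> cover_balanced" and v: "v \<in> cover_balanced" using assms by blast+
    have "commut3 u v \<in> cover_balanced"
      using commsp_subset_cover_balanced[of "{u}" "{v}"] commut3_in_commsp[of u "{u}" v "{v}"] u v
      by (auto simp: cover_balanced_def)
    moreover have "commut3 u v x x z = 0" if "covpair x z" for x z
    proof -
      have "u x z z = u x x z" "v x z z = v x x z"
        using cover_balancedD[OF u that] cover_balancedD[OF v that] by simp_all
      then show ?thesis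
        using u v that by (simp add: commut3_def mult3_covpair_left cover_balanced_def J31_def)
    qed
    ultimately show "commut3 u v \<in> cover_vanishing"
      by (auto simp: cover_balanced_def cover_vanishing_def)
  qed
qed (fastforce simp: cover_vanishing_def J31_def I3_def zero3_def add3_def smul3_def)+

locale commutator_generators =
  fixes U :: "('a::{order,finite}, 'r::comm_ring_1) fn3 set"
  assumes idem_mem: "x < y \<Longrightarrow> idem x y \<in> U"
    and elem3_mem: "x < y \<Longrightarrow> y < z \<Longrightarrow> elem3 x y z \<in> U"
begin

lemma elem3_strict_in_commsp: "x < y \<Longrightarrow> y < z \<Longrightarrow> elem3 x y z \<in> commsp U U"
  using commut3_idem_idem[of x y z] commut3_in_commsp[OF idem_mem idem_mem] by metis

lemma elem3_left_in_commsp: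
  assumes "x < z" "\<not> covpair x z"
  shows "elem3 x x z \<in> commsp U U"
proof -
  obtain b where xb: "covpair x b" and "b \<le> z" using exists_covpair_above[OF \<open>x < z\<close>] by blast
  with assms have "b < z" by (auto simp: le_less)
  have "elem3 x x z = (\<lambda>p q r. commut3 (idem x b) (elem3 x b z) p q r - elem3 x b z p q r)"
    by (simp add: commut3_idem_elem3[OF xb \<open>b < z\<close>] add3_def fun_eq_iff)
  also have "\<dots> \<in> commsp U U"
    unfolding commsp_def
    using covpair_less[OF xb] \<open>b < z\<close>
    by (intro rspan_diff) (auto intro: commut3_in_commsp[unfolded commsp_def] idem_mem elem3_mem
        elem3_strict_in_commsp[unfolded commsp_def])
  finally show ?thesis .
qed

lemma elem3_right_in_commsp:
  assumes "x < z" "\<not> covpair x z"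
  shows "elem3 x z z \<in> commsp U U"
proof -
  obtain b where "x \<le> b" and bz: "covpair b z" using exists_covpair_below[OF \<open>x < z\<close>] by blast
  with assms have "x < b" by (auto simp: le_less)
  have "elem3 x z z = (\<lambda>p q r. commut3 (elem3 x b z) (idem b z) p q r - elem3 x b z p q r)"
    by (simp add: commut3_elem3_idem[OF \<open>x < b\<close> bz] add3_def fun_eq_iff)
  also have "\<dots> \<in> commsp U U"
    unfolding commsp_def
    using covpair_less[OF bz] \<open>x < b\<close>
    by (intro rspan_diff) (auto intro: commut3_in_commsp[unfolded commsp_def] idem_mem elem3_mem
        elem3_strict_in_commsp[unfolded commsp_def])
  finally show ?thesis .
qed

lemma cover_vanishing_subset_commsp: "cover_vanishing \<subseteq> commsp U U"
proof
  fix h :: "('a, 'r) fn3" assume h: "h \<in> cover_vanishing"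
  have "smul3 (h a b c) (elem3 a b c) \<in> commsp U U" if "h a b c \<noteq> 0" for a b c
  proof -
    have "a \<le> b" "b \<le> c" using h that by (auto simp: cover_vanishing_def J31_def I3_def)
    moreover have "a \<noteq> c"
    proof
      assume "a = c"
      with \<open>a \<le> b\<close> \<open>b \<le> c\<close> have "b = a" by simp
      with \<open>a = c\<close> h that show False by (simp add: cover_vanishing_def J31_def)
    qed
    ultimately have "a < c" by auto
    consider "a = b" | "b = c" | "a < b" "b < c" using \<open>a \<le> b\<close> \<open>b \<le> c\<close> by (auto simp: le_less)
    then have "elem3 a b c \<in> commsp U U"
    proof cases
      case 1
      with h that have "\<not> covpair a c" by (auto simp: cover_vanishing_def)
      with 1 show ?thesis using elem3_left_in_commsp[OF \<open>a < c\<close>] by simp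
    next
      case 2
      with h that have "\<not> covpair a c" by (auto simp: cover_vanishing_def)
      with 2 show ?thesis using elem3_right_in_commsp[OF \<open>a < c\<close>] by simp
    qed (rule elem3_strict_in_commsp)
    then show ?thesis unfolding commsp_def by (rule rspan.smul)
  qed
  then have "sum3 (\<lambda>(a, b, c). smul3 (h a b c) (elem3 a b c)) {(a, b, c). h a b c \<noteq> 0} \<in> commsp U U"
    unfolding commsp_def by (intro rspan_sum3) (auto simp: commsp_def)
  then show "h \<in> commsp U U" using sum3_elem3_expansion[of h] by simp
qed

end

lemma cover_balanced_subset_J31: "cover_balanced \<subseteq> J31"
  by (auto simp: cover_balanced_def)

lemma commutator_generators_J31: "commutator_generators J31"
proof
  show "idem x y \<in> J31" if "x < y" for x y :: 'a
    using idem_in_cover_balanced[OF that] cover_balanced_subset_J31 by blast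
  show "elem3 x y z \<in> J31" if "x < y" "y < z" for x y z :: 'a
    using that by (auto intro: elem3_in_J31 less_imp_le order.strict_trans)
qed

lemma commutator_generators_cover_balanced: "commutator_generators cover_balanced"
  by unfold_locales (auto intro: idem_in_cover_balanced elem3_in_cover_balanced)

definition cover_part :: "('a::{order,finite}, 'r::comm_ring_1) fn3 \<Rightarrow> ('a, 'r) fn3" where
  "cover_part f = sum3 (\<lambda>(a, c). smul3 (f a a c) (idem a c)) {(a, c). covpair a c}"

lemma cover_part_apply:
  "cover_part f p q r = (if covpair p r \<and> (q = p \<or> q = r) then f p p r else 0)"
proof -
  have "cover_part f p q r =
      (\<Sum>i\<in>{(a, c). covpair a c}. if i = (p, r) then if q = p \<or> q = r then f p p r else 0 else 0)"
    unfolding cover_part_def sum3_def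
    by (intro sum.cong) (auto simp: smul3_def idem_apply split: if_splits)
  also have "\<dots> = (if covpair p r \<and> (q = p \<or> q = r) then f p p r else 0)"
    by (subst sum.delta) auto
  finally show ?thesis .
qed

lemma cover_part_in_Z32: "cover_part f \<in> Z32"
  unfolding cover_part_def Z32_def Z31_def commsp_def
proof (rule rspan_sum3)
  fix i :: "'a \<times> 'a" assume "i \<in> {(a, c). covpair a c}"
  then obtain a c where i: "i = (a, c)" and ac: "covpair a c" by auto
  have "idem a c = commut3 (elem3 a a c) (elem3 a c c)"
    by (rule commut3_elem3_elem3[OF ac, symmetric])
  also have "\<dots> \<in> commsp J31 J31"
    using covpair_less[OF ac] by (intro commut3_in_commsp elem3_in_J31) auto
  finally show "(case i of (a, c) \<Rightarrow> smul3 (f a a c) (idem a c))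
      \<in> rspan {commut3 u v |u v. u \<in> J31 \<and> v \<in> J31}"
    unfolding i commsp_def by (auto intro: rspan.smul)
qed simp

lemma cover_balanced_diff_cover_part:
  assumes "f \<in> cover_balanced"
  shows "(\<lambda>a b c. f a b c - cover_part f a b c) \<in> cover_vanishing"
  using assms covpair_less
  by (fastforce simp: cover_vanishing_def cover_balanced_def J31_def I3_def cover_part_apply)

lemma Z32_eq_cover_balanced: "Z32 = cover_balanced"
proof
  show "Z32 \<subseteq> cover_balanced"
    unfolding Z32_def Z31_def by (rule commsp_subset_cover_balanced) simp_all
  show "cover_balanced \<subseteq> Z32"
  proof
    fix f assume f: "f \<in> cover_balanced"
    have "f = add3 (\<lambda>a b c. f a b c - cover_part f a b c) (cover_part f)"
      by (simp add: add3_def)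
    also have "\<dots> \<in> Z32"
      using commutator_generators.cover_vanishing_subset_commsp[OF commutator_generators_J31]
        cover_balanced_diff_cover_part[OF f] cover_part_in_Z32
      unfolding Z32_def Z31_def commsp_def by (blast intro: rspan.add)
    finally show "f \<in> Z32" .
  qed
qed

lemma Z33_eq_cover_vanishing: "Z33 = cover_vanishing"
proof
  show "Z33 \<subseteq> cover_vanishing"
    unfolding Z33_def Z32_eq_cover_balanced by (rule commsp_subset_cover_vanishing) simp_all
  show "cover_vanishing \<subseteq> Z33"
    unfolding Z33_def Z32_eq_cover_balanced
    by (rule commutator_generators.cover_vanishing_subset_commsp[OF commutator_generators_cover_balanced])
qed

definition cover_proj :: "('a::{order,finite}, 'r::comm_ring_1) fn3 \<Rightarrow> ('a, 'r) dsum" where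
  "cover_proj f = (\<lambda>x y. if covpair x y then smul3 (f x x y) (idem x y) else zero3)"

lemma cover_proj_in_DS: "cover_proj f \<in> DS"
  by (auto simp: cover_proj_def DS_def)

lemma cover_proj_add: "cover_proj (add3 f g) = ds_add (cover_proj f) (cover_proj g)"
  by (auto simp: cover_proj_def ds_add_def fun_eq_iff add3_def smul3_def zero3_def distrib_right)

lemma cover_proj_smul: "cover_proj (smul3 r f) = ds_smul r (cover_proj f)"
  by (auto simp: cover_proj_def ds_smul_def fun_eq_iff smul3_def zero3_def mult.assoc)

lemma smul3_idem_eq_zero_iff:
  assumes "covpair (x::'a::{order,finite}) z"
  shows "smul3 r (idem x z :: ('a, 'r::comm_ring_1) fn3) = zero3 \<longleftrightarrow> r = 0"
  using assms by (auto simp: fun_eq_iff smul3_def zero3_def idem_apply)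

lemma mult3_cover_balanced_covpair:
  assumes "f \<in> cover_balanced" "g \<in> cover_balanced" "covpair x z"
  shows "mult3 f g x x z = f x x z * g x x z"
proof -
  have "f x x x = 0" using assms(1) by (simp add: cover_balanced_def J31_def)
  then show ?thesis using cover_balancedD[OF assms(2,3)] by (simp add: mult3_covpair_left[OF assms(3)])
qed

lemma cover_proj_mult:
  assumes "f \<in> cover_balanced" "g \<in> cover_balanced"
  shows "cover_proj (mult3 f g) = ds_mult (cover_proj f) (cover_proj g)"
proof (rule ext, rule ext)
  fix x y :: 'a
  show "cover_proj (mult3 f g) x y = ds_mult (cover_proj f) (cover_proj g) x y"
  proof (cases "covpair x y")
    case True
    then show ?thesis
      by (simp add: cover_proj_def ds_mult_def mult3_cover_balanced_covpair[OF assms True]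
          mult3_smul_left mult3_smul_right idem_mult_idem smul3_smul3 mult.commute)
  next
    case False
    then show ?thesis by (simp add: cover_proj_def ds_mult_def mult3_zero_left)
  qed
qed

lemma cover_proj_cover_part: "cover_proj (cover_part f) = cover_proj f"
  by (simp add: cover_proj_def cover_part_apply fun_eq_iff)

lemma DS_eq_cover_proj:
  assumes "d \<in> DS"
  shows "cover_proj (\<lambda>a b c. d a c a a c) = d"
proof (rule ext, rule ext)
  fix x y :: 'a
  show "cover_proj (\<lambda>a b c. d a c a a c) x y = d x y"
  proof (cases "covpair x y")
    case True
    then obtain r where r: "d x y = smul3 r (idem x y)" using assms by (auto simp: DS_def)
    then have "d x y x x y = r" using True by (simp add: smul3_def idem_apply)
    with True r show ?thesis by (simp add: cover_proj_def)
  next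
    case False
    then show ?thesis using assms by (simp add: cover_proj_def DS_def)
  qed
qed

lemma cover_proj_eq_zero_iff:
  assumes "f \<in> cover_balanced"
  shows "cover_proj f = ds_zero \<longleftrightarrow> f \<in> cover_vanishing"
proof -
  have "cover_proj f = ds_zero \<longleftrightarrow> (\<forall>x z. cover_proj f x z = zero3)"
    unfolding ds_zero_def by (auto intro!: ext)
  also have "\<dots> \<longleftrightarrow> (\<forall>x z. covpair x z \<longrightarrow> f x x z = 0)"
    by (simp add: cover_proj_def smul3_idem_eq_zero_iff)
  also have "\<dots> \<longleftrightarrow> f \<in> cover_vanishing"
    using assms cover_balancedD[OF assms] by (auto simp: cover_balanced_def cover_vanishing_def)
  finally show ?thesis .
qed

theorem proposition2p7:
  "\<exists>\<phi> :: ('a::{order,finite}, 'r::comm_ring_1) fn3 \<Rightarrow> ('a, 'r) dsum.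
      (\<forall>f \<in> Z32. \<phi> f \<in> DS)
    \<and> (\<forall>f \<in> Z32. \<forall>g \<in> Z32. \<phi> (add3 f g) = ds_add (\<phi> f) (\<phi> g))
    \<and> (\<forall>f \<in> Z32. \<forall>r. \<phi> (smul3 r f) = ds_smul r (\<phi> f))
    \<and> (\<forall>f \<in> Z32. \<forall>g \<in> Z32. \<phi> (mult3 f g) = ds_mult (\<phi> f) (\<phi> g))
    \<and> (\<forall>d \<in> DS. \<exists>f \<in> Z32. \<phi> f = d)
    \<and> (\<forall>f \<in> Z32. \<phi> f = ds_zero \<longleftrightarrow> f \<in> Z33)"
proof (intro exI[of _ cover_proj] conjI ballI allI)
  show "\<exists>f \<in> Z32. cover_proj f = d" if "d \<in> DS" for d :: "('a, 'r) dsum"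
  proof
    show "cover_proj (cover_part (\<lambda>a b c. d a c a a c)) = d"
      by (simp add: cover_proj_cover_part DS_eq_cover_proj[OF that])
  qed (rule cover_part_in_Z32)
qed (simp_all add: Z32_eq_cover_balanced Z33_eq_cover_vanishing cover_proj_in_DS cover_proj_add
    cover_proj_smul cover_proj_mult cover_proj_eq_zero_iff)

end
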